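(* Let $t \ge 2$ be an integer and let $M$ be a matroid with the $(t,2t)$-property. If $M$ has a $t$-echidna $(S_1,\ldots, S_n)$ with $n\geq 4t-3$, then there exist $m\ge n$ and pairs $S_{n+1},\dots,S_m$ such that $(S_1,\ldots,S_n,S_{n+1},\dots,S_m)$ is a partition of $E(M)$ that is both a $t$-echidna and a $t$-coechidna of $M$.
   Context: A matroid $M$ has the $(t,2t)$-property if every $t$-element subset of $E(M)$ is contained in both a $2t$-element circuit and a $2t$-element cocircuit of $M$. A $t$-echidna of order $n$ of $M$ is a partition $(S_1,\ldots,S_n)$ of a subset of $E(M)$ such that $|S_i|=2$ for all $i\in\{1,\dots,n\}$, and $\bigcup_{i\in I}S_i$ is a circuit of $M$ for every $I\subseteq\{1,\dots,n\}$ with $|I|=t$. A $t$-coechidna of $M$ is a $t$-echidna of the dual matroid $M^*$. *)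

theory Defs
  imports Main
begin

definition matroid :: "'a set \<Rightarrow> ('a set \<Rightarrow> bool) \<Rightarrow> bool" where
  "matroid E indep \<longleftrightarrow>
     finite E \<and>
     (\<forall>X. indep X \<longrightarrow> X \<subseteq> E) \<and>
     indep {} \<and>
     (\<forall>X Y. indep Y \<and> X \<subseteq> Y \<longrightarrow> indep X) \<and>
     (\<forall>X Y. indep X \<and> indep Y \<and> card X < card Y \<longrightarrow>
        (\<exists>y \<in> Y - X. indep (insert y X)))"

definition basis :: "'a set \<Rightarrow> ('a set \<Rightarrow> bool) \<Rightarrow> 'a set \<Rightarrow> bool" where
  "basis E indep B \<longleftrightarrow> indep B \<and> (\<forall>X. indep X \<and> B \<subseteq> X \<longrightarrow> X = B)"

definition circuit :: "'a set \<Rightarrow> ('a set \<Rightarrow> bool) \<Rightarrow> 'a set \<Rightarrow> bool" where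
  "circuit E indep C \<longleftrightarrow> C \<subseteq> E \<and> \<not> indep C \<and> (\<forall>x \<in> C. indep (C - {x}))"

definition dual_indep :: "'a set \<Rightarrow> ('a set \<Rightarrow> bool) \<Rightarrow> 'a set \<Rightarrow> bool" where
  "dual_indep E indep X \<longleftrightarrow> X \<subseteq> E \<and> (\<exists>B. basis E indep B \<and> X \<inter> B = {})"

definition cocircuit :: "'a set \<Rightarrow> ('a set \<Rightarrow> bool) \<Rightarrow> 'a set \<Rightarrow> bool" where
  "cocircuit E indep C \<longleftrightarrow> circuit E (dual_indep E indep) C"

definition t2t_property :: "nat \<Rightarrow> 'a set \<Rightarrow> ('a set \<Rightarrow> bool) \<Rightarrow> bool" where
  "t2t_property t E indep \<longleftrightarrow>
     (\<forall>X. X \<subseteq> E \<and> card X = t \<longrightarrow>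
        (\<exists>C. circuit E indep C \<and> card C = 2 * t \<and> X \<subseteq> C) \<and>
        (\<exists>D. cocircuit E indep D \<and> card D = 2 * t \<and> X \<subseteq> D))"

definition pair_partition :: "'a set \<Rightarrow> (nat \<Rightarrow> 'a set) \<Rightarrow> nat \<Rightarrow> bool" where
  "pair_partition E S n \<longleftrightarrow>
     (\<forall>i \<in> {1..n}. S i \<subseteq> E \<and> card (S i) = 2) \<and>
     (\<forall>i \<in> {1..n}. \<forall>j \<in> {1..n}. i \<noteq> j \<longrightarrow> S i \<inter> S j = {})"

definition echidna_wrt :: "('a set \<Rightarrow> bool) \<Rightarrow> nat \<Rightarrow> 'a set \<Rightarrow> (nat \<Rightarrow> 'a set) \<Rightarrow> nat \<Rightarrow> bool" where
  "echidna_wrt circ t E S n \<longleftrightarrow>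
     pair_partition E S n \<and>
     (\<forall>I. I \<subseteq> {1..n} \<and> card I = t \<longrightarrow> circ (\<Union>i\<in>I. S i))"

definition echidna :: "nat \<Rightarrow> 'a set \<Rightarrow> ('a set \<Rightarrow> bool) \<Rightarrow> (nat \<Rightarrow> 'a set) \<Rightarrow> nat \<Rightarrow> bool" where
  "echidna t E indep S n \<longleftrightarrow> echidna_wrt (circuit E indep) t E S n"

definition coechidna :: "nat \<Rightarrow> 'a set \<Rightarrow> ('a set \<Rightarrow> bool) \<Rightarrow> (nat \<Rightarrow> 'a set) \<Rightarrow> nat \<Rightarrow> bool" where
  "coechidna t E indep S n \<longleftrightarrow> echidna t E (dual_indep E indep) S n"

end

theory Submission
  imports Defs
begin

(* Circuits and cocircuits never meet in exactly one element, and the argument uses nothing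
   else about matroids: it works for any two families P and Q of subsets of E that are
   orthogonal in this sense and both have the (t,2t)-property.
   Let C be a 2t-element P-member through a transversal of t pairs of a Q-echidna. If C met
   one of these pairs in a single element, then t-1 pairs missed by C would complete that pair
   to a Q-member meeting C once; so C is the union of the t pairs, and a P-echidna of order at
   least 3t-1 is also a Q-echidna.
   For an element e outside the pairs, the same argument shows that the 2t-element P-member
   through e and a transversal of t-1 pairs is {e,f} together with these pairs, f outside all
   pairs. Comparing it with the analogous Q-members over disjoint index sets shows that f
   depends neither on the pairs nor on the family, so {e,f} can be added as a new pair in both
   senses; repeating this exhausts E. *)

section \<open>Orthogonality of circuits and cocircuits\<close>

lemma matroid_indep_finite: "matroid E indep \<Longrightarrow> indep X \<Longrightarrow> finite X"
  unfolding matroid_def by (meson finite_subset)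

lemma matroid_indep_mono: "matroid E indep \<Longrightarrow> indep Y \<Longrightarrow> X \<subseteq> Y \<Longrightarrow> indep X"
  unfolding matroid_def by blast

lemma matroid_augment:
  "matroid E indep \<Longrightarrow> indep X \<Longrightarrow> indep Y \<Longrightarrow> card X < card Y \<Longrightarrow> \<exists>y \<in> Y - X. indep (insert y X)"
  unfolding matroid_def by blast

lemma indep_card_le_basis:
  assumes m: "matroid E indep" and B: "basis E indep B" and X: "indep X"
  shows "card X \<le> card B"
proof (rule ccontr)
  have iB: "indep B"
    using B by (simp add: basis_def)
  assume "\<not> card X \<le> card B"
  then obtain y where "y \<in> X - B" "indep (insert y B)"
    using matroid_augment[OF m iB X] by auto
  with B show False
    unfolding basis_def by blast
qed

lemma basis_if_card_ge_basis:
  assumes m: "matroid E indep" and B: "basis E indep B" and Z: "indep Z" "card B \<le> card Z"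
  shows "basis E indep Z"
  unfolding basis_def
proof (intro conjI allI impI Z(1))
  fix W assume W: "indep W \<and> Z \<subseteq> W"
  then have "card W \<le> card Z"
    using indep_card_le_basis[OF m B] Z(2) le_trans by blast
  moreover have "finite W"
    using W matroid_indep_finite[OF m] by blast
  ultimately show "W = Z"
    using W card_seteq by blast
qed

lemma indep_extends_to_basis_within:
  assumes m: "matroid E indep" and B: "basis E indep B" and X: "indep X"
  obtains Z where "basis E indep Z" "X \<subseteq> Z" "Z \<subseteq> X \<union> B"
proof -
  let ?F = "\<lambda>Z. indep Z \<and> X \<subseteq> Z \<and> Z \<subseteq> X \<union> B"
  have iB: "indep B"
    using B by (simp add: basis_def)
  have "finite (X \<union> B)"
    using iB X matroid_indep_finite[OF m] by blast
  then have "\<forall>Z. ?F Z \<longrightarrow> card Z < Suc (card (X \<union> B))"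
    by (simp add: card_mono le_imp_less_Suc)
  moreover have "?F X"
    using X by blast
  ultimately obtain Z where Z: "?F Z" and max: "\<And>Z'. ?F Z' \<Longrightarrow> card Z' \<le> card Z"
    using ex_has_greatest_nat[of ?F X card "Suc (card (X \<union> B))"] by metis
  have "card B \<le> card Z"
  proof (rule ccontr)
    assume "\<not> card B \<le> card Z"
    then obtain y where y: "y \<in> B - Z" "indep (insert y Z)"
      using matroid_augment[OF m _ iB, of Z] Z by auto
    then have "?F (insert y Z)"
      using Z by blast
    moreover have "card (insert y Z) = Suc (card Z)"
      using y Z matroid_indep_finite[OF m] by simp
    ultimately show False
      using max by fastforce
  qed
  then show thesis
    using that basis_if_card_ge_basis[OF m B] Z by blast
qed

lemma circuit_cocircuit_inter_card_ne_1:
  assumes m: "matroid E indep" and C: "circuit E indep C" and D: "cocircuit E indep D"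
  shows "card (C \<inter> D) \<noteq> 1"
proof
  assume "card (C \<inter> D) = 1"
  then obtain x where x: "C \<inter> D = {x}"
    by (auto simp: card_1_singleton_iff)
  have D_codep: "\<not> dual_indep E indep D" and "dual_indep E indep (D - {x})" "D \<subseteq> E"
    using D x unfolding cocircuit_def circuit_def by auto
  then obtain B where B: "basis E indep B" "(D - {x}) \<inter> B = {}"
    unfolding dual_indep_def by blast
  have "indep (C - {x})"
    using C x unfolding circuit_def by auto
  then obtain Z where Z: "basis E indep Z" "C - {x} \<subseteq> Z" "Z \<subseteq> (C - {x}) \<union> B"
    using indep_extends_to_basis_within[OF m B(1)] by blast
  have "Z \<inter> D \<noteq> {}"
    using D_codep Z(1) \<open>D \<subseteq> E\<close> unfolding dual_indep_def by blast
  with Z(3) B(2) x have "x \<in> Z"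
    by blast
  with Z(2) have "C \<subseteq> Z"
    by blast
  moreover have "indep Z" "\<not> indep C"
    using C Z(1) unfolding circuit_def basis_def by auto
  ultimately show False
    using matroid_indep_mono[OF m] by blast
qed

section \<open>Partitions into pairs\<close>

lemma pair_partitionD:
  assumes "pair_partition E S n" "i \<in> {1..n}"
  shows "S i \<subseteq> E" "card (S i) = 2" "finite (S i)"
proof -
  show "S i \<subseteq> E" "card (S i) = 2"
    using assms unfolding pair_partition_def by blast+
  then show "finite (S i)"
    by (simp add: card_ge_0_finite)
qed

lemma pair_partition_disjoint:
  "pair_partition E S n \<Longrightarrow> i \<in> {1..n} \<Longrightarrow> j \<in> {1..n} \<Longrightarrow> i \<noteq> j \<Longrightarrow> S i \<inter> S j = {}"
  unfolding pair_partition_def by blast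

lemma pair_partition_UN_subset:
  "pair_partition E S n \<Longrightarrow> I \<subseteq> {1..n} \<Longrightarrow> (\<Union>i\<in>I. S i) \<subseteq> E"
  using pair_partitionD(1) by blast

lemma pair_partition_UN_disjoint:
  assumes pp: "pair_partition E S n" and IJ: "I \<subseteq> {1..n}" "J \<subseteq> {1..n}" "I \<inter> J = {}"
  shows "(\<Union>i\<in>I. S i) \<inter> (\<Union>j\<in>J. S j) = {}"
proof -
  have "S i \<inter> S j = {}" if "i \<in> I" "j \<in> J" for i j
    using that IJ by (intro pair_partition_disjoint[OF pp]) auto
  then show ?thesis
    by blast
qed

lemma pair_partition_UN_inter_pair:
  assumes pp: "pair_partition E S n" and I: "I \<subseteq> {1..n}" and j: "j \<in> {1..n} - I"
  shows "(\<Union>i\<in>I. S i) \<inter> S j = {}"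
proof -
  have "(\<Union>i\<in>I. S i) \<inter> (\<Union>i\<in>{j}. S i) = {}"
    using I j by (intro pair_partition_UN_disjoint[OF pp]) auto
  then show ?thesis
    by simp
qed

lemma card_UN_pair_partition:
  assumes pp: "pair_partition E S n" and I: "I \<subseteq> {1..n}"
  shows "card (\<Union>i\<in>I. S i) = 2 * card I"
proof -
  have "card (\<Union>i\<in>I. S i) = (\<Sum>i\<in>I. card (S i))"
  proof (rule card_UN_disjoint)
    show "finite I"
      using I finite_subset by blast
    show "\<forall>i\<in>I. finite (S i)"
      using I pair_partitionD(3)[OF pp] by blast
    show "\<forall>i\<in>I. \<forall>j\<in>I. i \<noteq> j \<longrightarrow> S i \<inter> S j = {}"
      using I pair_partition_disjoint[OF pp] by blast
  qed
  also have "\<dots> = (\<Sum>i\<in>I. 2)"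
    using I pair_partitionD(2)[OF pp] by (intro sum.cong) auto
  finally show ?thesis
    by simp
qed

lemma pair_partition_transversal_within:
  assumes pp: "pair_partition E S n" and I: "I \<subseteq> {1..n}"
    and meets: "\<And>i. i \<in> I \<Longrightarrow> S i \<inter> A \<noteq> {}"
  shows "\<exists>X \<subseteq> A. X \<subseteq> (\<Union>i\<in>I. S i) \<and> card X = card I \<and> (\<forall>i\<in>I. X \<inter> S i \<noteq> {})"
proof -
  define x where "x i = (SOME a. a \<in> S i \<inter> A)" for i
  have x: "x i \<in> S i \<inter> A" if "i \<in> I" for i
    unfolding x_def using meets[OF that] by (rule some_in_eq[THEN iffD2])
  have "inj_on x I"
  proof (rule inj_onI, rule ccontr)
    fix i j assume ij: "i \<in> I" "j \<in> I" "x i = x j" "i \<noteq> j"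
    then have "S i \<inter> S j = {}"
      using I pair_partition_disjoint[OF pp] by (meson subsetD)
    then show False
      using x[OF ij(1)] x[OF ij(2)] ij(3) by auto
  qed
  then have "card (x ` I) = card I"
    by (rule card_image)
  moreover have "x ` I \<subseteq> A" "x ` I \<subseteq> (\<Union>i\<in>I. S i)" "\<forall>i\<in>I. x ` I \<inter> S i \<noteq> {}"
    using x by blast+
  ultimately show ?thesis
    by blast
qed

lemma pair_partition_transversal:
  assumes pp: "pair_partition E S n" and I: "I \<subseteq> {1..n}"
  shows "\<exists>X \<subseteq> (\<Union>i\<in>I. S i). card X = card I \<and> (\<forall>i\<in>I. X \<inter> S i \<noteq> {})"
proof -
  have "S i \<inter> (\<Union>i\<in>I. S i) \<noteq> {}" if "i \<in> I" for i
  proof -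
    have "card (S i) = 2"
      using pair_partitionD(2)[OF pp] I that by blast
    then have "S i \<noteq> {}"
      by auto
    then show ?thesis
      using that by blast
  qed
  then have "\<exists>X \<subseteq> (\<Union>i\<in>I. S i). X \<subseteq> (\<Union>i\<in>I. S i) \<and> card X = card I \<and> (\<forall>i\<in>I. X \<inter> S i \<noteq> {})"
    by (rule pair_partition_transversal_within[OF pp I])
  then show ?thesis
    by blast
qed

lemma card_pairs_meeting_le:
  assumes pp: "pair_partition E S n" and K: "K \<subseteq> {1..n}" and A: "finite A"
    and meets: "\<And>j. j \<in> K \<Longrightarrow> S j \<inter> A \<noteq> {}"
  shows "card K \<le> card A"
proof -
  obtain X where "X \<subseteq> A" "card X = card K"
    using pair_partition_transversal_within[OF pp K meets] by blast
  then show ?thesis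
    using card_mono[OF A] by metis
qed

lemma UN_fun_upd_Suc:
  "(\<Union>i\<in>{1..Suc n}. (S(Suc n := A)) i) = A \<union> (\<Union>i\<in>{1..n}. S i)"
proof -
  have "{1..Suc n} = insert (Suc n) {1..n}"
    by auto
  then have "(\<Union>i\<in>{1..Suc n}. (S(Suc n := A)) i) = A \<union> (\<Union>i\<in>{1..n}. (S(Suc n := A)) i)"
    by (simp only: UN_insert fun_upd_same)
  moreover have "(\<Union>i\<in>{1..n}. (S(Suc n := A)) i) = (\<Union>i\<in>{1..n}. S i)"
    by (intro SUP_cong) auto
  ultimately show ?thesis
    by (simp only:)
qed

lemma pair_partition_extend:
  assumes pp: "pair_partition E S n" and ef: "{e, f} \<subseteq> E" "e \<noteq> f"
    and new: "e \<notin> (\<Union>i\<in>{1..n}. S i)" "f \<notin> (\<Union>i\<in>{1..n}. S i)"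
  shows "pair_partition E (S(Suc n := {e, f})) (Suc n)"
proof -
  let ?S = "S(Suc n := {e, f})"
  have old: "i \<in> {1..n}" if "i \<in> {1..Suc n}" "i \<noteq> Suc n" for i
    using that by auto
  have "?S i \<subseteq> E \<and> card (?S i) = 2" if i: "i \<in> {1..Suc n}" for i
    using ef pair_partitionD[OF pp old[OF i]] by (cases "i = Suc n") auto
  moreover have "?S i \<inter> ?S j = {}" if i: "i \<in> {1..Suc n}" and j: "j \<in> {1..Suc n}" and "i \<noteq> j" for i j
  proof -
    consider "i = Suc n" "j \<in> {1..n}" | "j = Suc n" "i \<in> {1..n}" | "i \<in> {1..n}" "j \<in> {1..n}"
      using old i j \<open>i \<noteq> j\<close> by blast
    then show ?thesis
      by cases (use new pair_partition_disjoint[OF pp] \<open>i \<noteq> j\<close> in auto)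
  qed
  ultimately show ?thesis
    unfolding pair_partition_def by blast
qed

lemma echidna_wrt_extend:
  assumes ech: "echidna_wrt circ t E S n" and t: "0 < t"
    and ef: "{e, f} \<subseteq> E" "e \<noteq> f"
    and new: "e \<notin> (\<Union>i\<in>{1..n}. S i)" "f \<notin> (\<Union>i\<in>{1..n}. S i)"
    and circ: "\<And>I. I \<subseteq> {1..n} \<Longrightarrow> card I = t - 1 \<Longrightarrow> circ (insert e (insert f (\<Union>i\<in>I. S i)))"
  shows "echidna_wrt circ t E (S(Suc n := {e, f})) (Suc n)"
proof -
  let ?S = "S(Suc n := {e, f})"
  have pp: "pair_partition E S n"
    using ech by (simp add: echidna_wrt_def)
  have "circ (\<Union>i\<in>I. ?S i)" if I: "I \<subseteq> {1..Suc n}" "card I = t" for I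
  proof (cases "Suc n \<in> I")
    case True
    have "finite I"
      using I(1) finite_subset by blast
    then have "I - {Suc n} \<subseteq> {1..n}" "card (I - {Suc n}) = t - 1"
      using I True by (auto simp: le_Suc_eq)
    moreover have "(\<Union>i\<in>I. ?S i) = insert e (insert f (\<Union>i\<in>I - {Suc n}. S i))"
      using True by auto
    ultimately show ?thesis
      using circ by simp
  next
    case False
    then have "I \<subseteq> {1..n}"
      using I(1) by (auto simp: le_Suc_eq)
    moreover have "(\<Union>i\<in>I. ?S i) = (\<Union>i\<in>I. S i)"
      using False by auto
    ultimately show ?thesis
      using ech I(2) unfolding echidna_wrt_def by simp
  qed
  then show ?thesis
    using pair_partition_extend[OF pp ef new] unfolding echidna_wrt_def by blast
qed

lemma obtain_index_set_avoiding:
  assumes A: "A \<subseteq> {1..n}" and k: "k + card A \<le> n"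
  obtains J where "J \<subseteq> {1..n} - A" "card J = k"
proof -
  have "card ({1..n} - A) = n - card A"
    using card_Diff_subset[OF finite_subset[OF A] A] by simp
  then have "k \<le> card ({1..n} - A)"
    using k by linarith
  then show thesis
    using that by (meson obtain_subset_with_card_n)
qed

lemma card_pairs_missing_ge:
  assumes pp: "pair_partition E S n" and C: "finite C" "card C = 2 * t"
    and X: "X \<subseteq> C" "card X = t" and I: "I \<subseteq> {1..n}" "card I + 2 * t - 1 \<le> n"
    and X_out: "\<forall>j \<in> {1..n} - I. X \<inter> S j = {}"
  shows "t - 1 \<le> card {j \<in> {1..n} - I. C \<inter> S j = {}}"
proof -
  let ?K = "{j \<in> {1..n} - I. C \<inter> S j \<noteq> {}}"
  have "card ?K \<le> card (C - X)"
  proof (rule card_pairs_meeting_le[OF pp])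
    show "?K \<subseteq> {1..n}" "finite (C - X)"
      using C(1) by auto
    show "S j \<inter> (C - X) \<noteq> {}" if "j \<in> ?K" for j
      using that X_out by blast
  qed
  also have "card (C - X) = t"
    using card_Diff_subset[OF finite_subset[OF X(1) C(1)] X(1)] C(2) X(2) by simp
  finally have K: "card ?K \<le> t" .
  have "card ({1..n} - I) = n - card I"
    using card_Diff_subset[OF finite_subset[OF I(1)] I(1)] by simp
  moreover have "card ({1..n} - I - ?K) = card ({1..n} - I) - card ?K"
    by (rule card_Diff_subset) auto
  moreover have "{1..n} - I - ?K = {j \<in> {1..n} - I. C \<inter> S j = {}}"
    by blast
  ultimately have "card {j \<in> {1..n} - I. C \<inter> S j = {}} = n - card I - card ?K"
    by simp
  then show ?thesis
    using K I(2) by arith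
qed

section \<open>Orthogonal families with the (t,2t)-property\<close>

locale orthogonal_t2t =
  fixes t :: nat and E :: "'a set" and P Q :: "'a set \<Rightarrow> bool"
  assumes t_pos: "0 < t"
    and finite_E: "finite E"
    and P_subset: "P C \<Longrightarrow> C \<subseteq> E"
    and Q_subset: "Q D \<Longrightarrow> D \<subseteq> E"
    and orthogonal: "P C \<Longrightarrow> Q D \<Longrightarrow> card (C \<inter> D) \<noteq> 1"
    and P_t2t: "X \<subseteq> E \<Longrightarrow> card X = t \<Longrightarrow> \<exists>C. P C \<and> card C = 2 * t \<and> X \<subseteq> C"
    and Q_t2t: "X \<subseteq> E \<Longrightarrow> card X = t \<Longrightarrow> \<exists>D. Q D \<and> card D = 2 * t \<and> X \<subseteq> D"

sublocale orthogonal_t2t \<subseteq> dual: orthogonal_t2t t E Q P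
proof unfold_locales
  fix C D assume "Q C" "P D"
  then show "card (C \<inter> D) \<noteq> 1"
    using orthogonal by (metis Int_commute)
qed (simp_all add: t_pos finite_E Q_subset P_subset Q_t2t P_t2t)

context orthogonal_t2t
begin

lemma P_finite: "P C \<Longrightarrow> finite C"
  using P_subset finite_E finite_subset by blast

lemma member_inter_pair_card_ne_1:
  assumes ech: "echidna_wrt Q t E S n" and C: "P C" and i: "i \<in> {1..n}"
    and avoid: "t - 1 \<le> card {j \<in> {1..n} - {i}. C \<inter> S j = {}}"
  shows "card (C \<inter> S i) \<noteq> 1"
proof -
  obtain J where J: "J \<subseteq> {j \<in> {1..n} - {i}. C \<inter> S j = {}}" "card J = t - 1"
    using avoid by (meson obtain_subset_with_card_n)
  have "finite J" "i \<notin> J"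
    using J(1) finite_subset[of J "{1..n}"] by blast+
  then have "card (insert i J) = t"
    using J(2) t_pos by simp
  moreover have "insert i J \<subseteq> {1..n}"
    using J(1) i by blast
  ultimately have "Q (\<Union>j\<in>insert i J. S j)"
    using ech unfolding echidna_wrt_def by blast
  moreover have "C \<inter> (\<Union>j\<in>insert i J. S j) = C \<inter> S i"
    using J(1) by blast
  ultimately show ?thesis
    using orthogonal[OF C] by metis
qed

lemma member_contains_pairs:
  assumes ech: "echidna_wrt Q t E S n" and C: "P C" "card C = 2 * t"
    and X: "X \<subseteq> C" "card X = t" and I: "I \<subseteq> {1..n}" "card I + 2 * t - 1 \<le> n"
    and X_out: "\<forall>j \<in> {1..n} - I. X \<inter> S j = {}" and X_in: "\<forall>i \<in> I. X \<inter> S i \<noteq> {}"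
  shows "(\<Union>i\<in>I. S i) \<subseteq> C"
proof (rule UN_least)
  fix i assume "i \<in> I"
  then have i: "i \<in> {1..n}"
    using I(1) by blast
  have pp: "pair_partition E S n"
    using ech by (simp add: echidna_wrt_def)
  have "t - 1 \<le> card {j \<in> {1..n} - I. C \<inter> S j = {}}"
    by (rule card_pairs_missing_ge[OF pp P_finite[OF C(1)] C(2) X I X_out])
  also have "\<dots> \<le> card {j \<in> {1..n} - {i}. C \<inter> S j = {}}"
    using \<open>i \<in> I\<close> by (intro card_mono) auto
  finally have "card (C \<inter> S i) \<noteq> 1"
    by (rule member_inter_pair_card_ne_1[OF ech C(1) i])
  have fin: "finite (S i)" and two: "card (S i) = 2"
    using pair_partitionD[OF pp i] by blast+
  have "C \<inter> S i \<noteq> {}"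
    using X_in X(1) \<open>i \<in> I\<close> by blast
  then have "card (C \<inter> S i) \<noteq> 0"
    using fin by simp
  moreover have "card (C \<inter> S i) \<le> card (S i)"
    using fin by (intro card_mono) auto
  ultimately have "card (C \<inter> S i) = card (S i)"
    using \<open>card (C \<inter> S i) \<noteq> 1\<close> two by linarith
  then show "S i \<subseteq> C"
    using fin card_subset_eq[of "S i" "C \<inter> S i"] by blast
qed

lemma echidna_wrt_transfer:
  assumes ech: "echidna_wrt Q t E S n" and n: "3 * t - 1 \<le> n"
  shows "echidna_wrt P t E S n"
proof -
  have pp: "pair_partition E S n"
    using ech by (simp add: echidna_wrt_def)
  have "P (\<Union>i\<in>I. S i)" if I: "I \<subseteq> {1..n}" "card I = t" for I
  proof -
    obtain X where X: "X \<subseteq> (\<Union>i\<in>I. S i)" "card X = t" "\<forall>i\<in>I. X \<inter> S i \<noteq> {}"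
      using pair_partition_transversal[OF pp I(1)] I(2) by blast
    moreover have "X \<subseteq> E"
      using X(1) pair_partition_UN_subset[OF pp I(1)] by blast
    ultimately obtain C where C: "P C" "card C = 2 * t" "X \<subseteq> C"
      using P_t2t by blast
    have "\<forall>j \<in> {1..n} - I. X \<inter> S j = {}"
      using X(1) pair_partition_UN_inter_pair[OF pp I(1)] by blast
    then have "(\<Union>i\<in>I. S i) \<subseteq> C"
      using member_contains_pairs[OF ech C(1,2) C(3) X(2) I(1)] X(3) I(2) n by simp
    moreover have "card (\<Union>i\<in>I. S i) = card C"
      using card_UN_pair_partition[OF pp I(1)] I(2) C(2) by simp
    ultimately have "(\<Union>i\<in>I. S i) = C"
      using card_subset_eq[OF P_finite[OF C(1)]] by blast
    then show ?thesis
      using C(1) by simp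
  qed
  then show ?thesis
    using pp unfolding echidna_wrt_def by blast
qed

lemma partner_outside_pairs:
  assumes ech: "echidna_wrt Q t E S n" and n: "2 * t - 1 \<le> n"
    and I: "I \<subseteq> {1..n}" "card I = t - 1"
    and e: "e \<notin> (\<Union>i\<in>{1..n}. S i)" and f: "f \<notin> (\<Union>i\<in>I. S i)"
    and C: "P (insert e (insert f (\<Union>i\<in>I. S i)))"
  shows "f \<notin> (\<Union>i\<in>{1..n}. S i)"
proof
  let ?C = "insert e (insert f (\<Union>i\<in>I. S i))"
  have pp: "pair_partition E S n"
    using ech by (simp add: echidna_wrt_def)
  assume "f \<in> (\<Union>i\<in>{1..n}. S i)"
  then obtain j where j: "j \<in> {1..n} - I" "f \<in> S j"
    using f by blast
  have "?C \<inter> S k = {}" if k: "k \<in> {1..n} - insert j I" for k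
  proof -
    have "S j \<inter> S k = {}"
      using k j(1) by (intro pair_partition_disjoint[OF pp]) auto
    moreover have "(\<Union>i\<in>I. S i) \<inter> S k = {}"
      using k by (intro pair_partition_UN_inter_pair[OF pp I(1)]) auto
    ultimately show ?thesis
      using j(2) e k by blast
  qed
  then have "{1..n} - insert j I \<subseteq> {k \<in> {1..n} - {j}. ?C \<inter> S k = {}}"
    by blast
  then have "card ({1..n} - insert j I) \<le> card {k \<in> {1..n} - {j}. ?C \<inter> S k = {}}"
    by (intro card_mono) auto
  moreover have "card ({1..n} - insert j I) = n - t"
  proof -
    have "finite I" "j \<notin> I"
      using I(1) j(1) finite_subset by blast+
    then have "card (insert j I) = t"
      using I(2) t_pos by simp
    moreover have sub: "insert j I \<subseteq> {1..n}"
      using j(1) I(1) by blast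
    ultimately show ?thesis
      using card_Diff_subset[OF finite_subset[OF sub] sub] by simp
  qed
  ultimately have "t - 1 \<le> card {k \<in> {1..n} - {j}. ?C \<inter> S k = {}}"
    using n by simp
  then have "card (?C \<inter> S j) \<noteq> 1"
    using member_inter_pair_card_ne_1[OF ech C] j(1) by blast
  moreover have "?C \<inter> S j = {f}"
    using j e pair_partition_UN_inter_pair[OF pp I(1) j(1)] by blast
  ultimately show False
    by simp
qed

lemma exists_partner:
  assumes ech: "echidna_wrt Q t E S n" and n: "3 * t - 2 \<le> n"
    and e: "e \<in> E" "e \<notin> (\<Union>i\<in>{1..n}. S i)" and I: "I \<subseteq> {1..n}" "card I = t - 1"
  obtains f where "f \<noteq> e" "f \<notin> (\<Union>i\<in>{1..n}. S i)" "P (insert e (insert f (\<Union>i\<in>I. S i)))"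
proof -
  have pp: "pair_partition E S n"
    using ech by (simp add: echidna_wrt_def)
  let ?U = "\<Union>i\<in>I. S i"
  have U_E: "?U \<subseteq> E"
    by (rule pair_partition_UN_subset[OF pp I(1)])
  then have U_fin: "finite ?U"
    using finite_E by (rule finite_subset)
  have e_U: "e \<notin> ?U"
    using e(2) I(1) by blast
  obtain T where T: "T \<subseteq> ?U" "card T = card I" "\<forall>i\<in>I. T \<inter> S i \<noteq> {}"
    using pair_partition_transversal[OF pp I(1)] by blast
  have "e \<notin> T" "finite T"
    using T(1) U_fin e_U finite_subset by blast+
  then have card_eT: "card (insert e T) = t"
    using T(2) I(2) t_pos by simp
  moreover have "insert e T \<subseteq> E"
    using T(1) U_E e(1) by blast
  ultimately obtain C where C: "P C" "card C = 2 * t" "insert e T \<subseteq> C"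
    using P_t2t by blast
  have "insert e T \<inter> S j = {}" if "j \<in> {1..n} - I" for j
    using pair_partition_UN_inter_pair[OF pp I(1) that] T(1) e(2) that by blast
  then have "?U \<subseteq> C"
    using member_contains_pairs[OF ech C(1,2) C(3) card_eT I(1)] T(3) I(2) n by simp
  then have eU_C: "insert e ?U \<subseteq> C"
    using C(3) by blast
  moreover have "card (insert e ?U) = 2 * t - 1"
    using card_UN_pair_partition[OF pp I(1)] I(2) U_fin e_U t_pos by simp
  ultimately have "card (C - insert e ?U) = 1"
    using card_Diff_subset[of "insert e ?U" C] U_fin C(2) t_pos by simp
  then obtain f where "C - insert e ?U = {f}"
    by (auto simp: card_1_singleton_iff)
  then have "C = insert e (insert f ?U)" and "f \<noteq> e" "f \<notin> ?U"
    using eU_C by blast+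
  then have "P (insert e (insert f ?U))"
    using C(1) by simp
  moreover have "f \<notin> (\<Union>i\<in>{1..n}. S i)"
    using n by (intro partner_outside_pairs[OF ech _ I e(2) \<open>f \<notin> ?U\<close> \<open>P (insert e (insert f ?U))\<close>]) simp
  ultimately show thesis
    using \<open>f \<noteq> e\<close> by (intro that)
qed

lemma partners_agree:
  assumes pp: "pair_partition E S n" and IJ: "I \<subseteq> {1..n}" "J \<subseteq> {1..n}" "I \<inter> J = {}"
    and outside: "e \<notin> (\<Union>i\<in>{1..n}. S i)" "f \<notin> (\<Union>i\<in>{1..n}. S i)" "g \<notin> (\<Union>i\<in>{1..n}. S i)"
    and ne: "f \<noteq> e" "g \<noteq> e"
    and C: "P (insert e (insert f (\<Union>i\<in>I. S i)))" and D: "Q (insert e (insert g (\<Union>j\<in>J. S j)))"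
  shows "f = g"
proof (rule ccontr)
  assume "f \<noteq> g"
  have "(\<Union>i\<in>I. S i) \<inter> (\<Union>j\<in>J. S j) = {}"
    by (rule pair_partition_UN_disjoint[OF pp IJ])
  moreover have "e \<notin> (\<Union>i\<in>I. S i)" "f \<notin> (\<Union>j\<in>J. S j)" "g \<notin> (\<Union>i\<in>I. S i)" "e \<notin> (\<Union>j\<in>J. S j)"
    using outside IJ(1,2) by blast+
  ultimately have inter: "insert e (insert f (\<Union>i\<in>I. S i)) \<inter> insert e (insert g (\<Union>j\<in>J. S j)) = {e}"
    using \<open>f \<noteq> g\<close> ne by blast
  have "card (insert e (insert f (\<Union>i\<in>I. S i)) \<inter> insert e (insert g (\<Union>j\<in>J. S j))) \<noteq> 1"
    by (rule orthogonal[OF C D])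
  then show False
    unfolding inter by simp
qed

end

(* Reopened so that the dual instances of the lemmas above are available. *)
context orthogonal_t2t
begin

lemma P_partner_unique:
  assumes echP: "echidna_wrt P t E S n" and n: "3 * t - 2 \<le> n"
    and e: "e \<in> E" "e \<notin> (\<Union>i\<in>{1..n}. S i)"
    and I: "I \<subseteq> {1..n}" "card I = t - 1" and I': "I' \<subseteq> {1..n}" "card I' = t - 1"
    and f: "f \<noteq> e" "f \<notin> (\<Union>i\<in>{1..n}. S i)" "P (insert e (insert f (\<Union>i\<in>I. S i)))"
    and f': "f' \<noteq> e" "f' \<notin> (\<Union>i\<in>{1..n}. S i)" "P (insert e (insert f' (\<Union>i\<in>I'. S i)))"
  shows "f = f'"
proof -
  have pp: "pair_partition E S n"
    using echP by (simp add: echidna_wrt_def)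
  have "I \<union> I' \<subseteq> {1..n}"
    using I(1) I'(1) by blast
  moreover have "t - 1 + card (I \<union> I') \<le> n"
    using I(2) I'(2) n card_Un_le[of I I'] by linarith
  ultimately obtain J where "J \<subseteq> {1..n} - (I \<union> I')" "card J = t - 1"
    by (rule obtain_index_set_avoiding)
  then have J: "J \<subseteq> {1..n}" "card J = t - 1" "I \<inter> J = {}" "I' \<inter> J = {}"
    by blast+
  obtain g where g: "g \<noteq> e" "g \<notin> (\<Union>i\<in>{1..n}. S i)" "Q (insert e (insert g (\<Union>i\<in>J. S i)))"
    by (rule dual.exists_partner[OF echP n e J(1,2)])
  have "f = g"
    by (rule partners_agree[OF pp I(1) J(1,3) e(2) f(2) g(2) f(1) g(1) f(3) g(3)])
  moreover have "f' = g"
    by (rule partners_agree[OF pp I'(1) J(1,4) e(2) f'(2) g(2) f'(1) g(1) f'(3) g(3)])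
  ultimately show ?thesis
    by simp
qed

lemma exists_common_partner:
  assumes echP: "echidna_wrt P t E S n" and echQ: "echidna_wrt Q t E S n" and n: "3 * t - 2 \<le> n"
    and e: "e \<in> E" "e \<notin> (\<Union>i\<in>{1..n}. S i)"
  obtains f where "f \<in> E" "f \<noteq> e" "f \<notin> (\<Union>i\<in>{1..n}. S i)"
    "\<forall>I. I \<subseteq> {1..n} \<and> card I = t - 1 \<longrightarrow> P (insert e (insert f (\<Union>i\<in>I. S i)))"
    "\<forall>I. I \<subseteq> {1..n} \<and> card I = t - 1 \<longrightarrow> Q (insert e (insert f (\<Union>i\<in>I. S i)))"
proof -
  have pp: "pair_partition E S n"
    using echP by (simp add: echidna_wrt_def)
  define I\<^sub>0 where "I\<^sub>0 = {1..t - 1}"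
  have I\<^sub>0: "I\<^sub>0 \<subseteq> {1..n}" "card I\<^sub>0 = t - 1"
    unfolding I\<^sub>0_def using n by auto
  obtain f where f: "f \<noteq> e" "f \<notin> (\<Union>i\<in>{1..n}. S i)" "P (insert e (insert f (\<Union>i\<in>I\<^sub>0. S i)))"
    by (rule exists_partner[OF echQ n e I\<^sub>0])
  have P_all: "P (insert e (insert f (\<Union>i\<in>I. S i)))" if I: "I \<subseteq> {1..n}" "card I = t - 1" for I
  proof -
    obtain f' where f': "f' \<noteq> e" "f' \<notin> (\<Union>i\<in>{1..n}. S i)" "P (insert e (insert f' (\<Union>i\<in>I. S i)))"
      by (rule exists_partner[OF echQ n e I])
    have "f = f'"
      by (rule P_partner_unique[OF echP n e I\<^sub>0 I f f'])
    then show ?thesis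
      using f'(3) by simp
  qed
  have Q_all: "Q (insert e (insert f (\<Union>i\<in>I. S i)))" if I: "I \<subseteq> {1..n}" "card I = t - 1" for I
  proof -
    obtain g where g: "g \<noteq> e" "g \<notin> (\<Union>i\<in>{1..n}. S i)" "Q (insert e (insert g (\<Union>i\<in>I. S i)))"
      by (rule dual.exists_partner[OF echP n e I])
    have "t - 1 + card I \<le> n"
      using I(2) n by simp
    then obtain J where "J \<subseteq> {1..n} - I" "card J = t - 1"
      by (rule obtain_index_set_avoiding[OF I(1)])
    then have J: "J \<subseteq> {1..n}" "card J = t - 1" "J \<inter> I = {}"
      by blast+
    have "f = g"
      by (rule partners_agree[OF pp J(1) I(1) J(3) e(2) f(2) g(2) f(1) g(1) P_all[OF J(1,2)] g(3)])
    then show ?thesis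
      using g(3) by simp
  qed
  have "f \<in> E"
    using P_subset[OF f(3)] by blast
  then show thesis
    using that f(1,2) P_all Q_all by blast
qed

lemma echidnas_extend_by_pair:
  assumes echP: "echidna_wrt P t E S n" and echQ: "echidna_wrt Q t E S n" and n: "3 * t - 2 \<le> n"
    and e: "e \<in> E" "e \<notin> (\<Union>i\<in>{1..n}. S i)"
  obtains f where "echidna_wrt P t E (S(Suc n := {e, f})) (Suc n)"
    "echidna_wrt Q t E (S(Suc n := {e, f})) (Suc n)"
proof -
  obtain f where f: "f \<in> E" "f \<noteq> e" "f \<notin> (\<Union>i\<in>{1..n}. S i)"
    "\<forall>I. I \<subseteq> {1..n} \<and> card I = t - 1 \<longrightarrow> P (insert e (insert f (\<Union>i\<in>I. S i)))"
    "\<forall>I. I \<subseteq> {1..n} \<and> card I = t - 1 \<longrightarrow> Q (insert e (insert f (\<Union>i\<in>I. S i)))"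
    by (rule exists_common_partner[OF echP echQ n e])
  have ef: "{e, f} \<subseteq> E" "e \<noteq> f"
    using e(1) f(1,2) by auto
  have "echidna_wrt P t E (S(Suc n := {e, f})) (Suc n)"
    using f(4) by (intro echidna_wrt_extend[OF echP t_pos ef e(2) f(3)]) auto
  moreover have "echidna_wrt Q t E (S(Suc n := {e, f})) (Suc n)"
    using f(5) by (intro echidna_wrt_extend[OF echQ t_pos ef e(2) f(3)]) auto
  ultimately show thesis
    by (rule that)
qed

lemma echidnas_extend_to_cover:
  assumes "echidna_wrt P t E S n" "echidna_wrt Q t E S n" "3 * t - 2 \<le> n"
  shows "\<exists>m S'. n \<le> m \<and> (\<forall>i\<in>{1..n}. S' i = S i) \<and> (\<Union>i\<in>{1..m}. S' i) = E \<and>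
           echidna_wrt P t E S' m \<and> echidna_wrt Q t E S' m"
  using assms
proof (induction "card (E - (\<Union>i\<in>{1..n}. S i))" arbitrary: n S rule: less_induct)
  case less
  have pp: "pair_partition E S n"
    using less.prems(1) by (simp add: echidna_wrt_def)
  show ?case
  proof (cases "(\<Union>i\<in>{1..n}. S i) = E")
    case True
    then show ?thesis
      using less.prems(1,2) by blast
  next
    case False
    then obtain e where e: "e \<in> E" "e \<notin> (\<Union>i\<in>{1..n}. S i)"
      using pair_partition_UN_subset[OF pp order_refl] by blast
    then obtain f where ech: "echidna_wrt P t E (S(Suc n := {e, f})) (Suc n)"
      "echidna_wrt Q t E (S(Suc n := {e, f})) (Suc n)"
      by (rule echidnas_extend_by_pair[OF less.prems])
    define S' where "S' = S(Suc n := {e, f})"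
    have "E - (\<Union>i\<in>{1..Suc n}. S' i) \<subseteq> E - (\<Union>i\<in>{1..n}. S i)"
      "e \<in> E - (\<Union>i\<in>{1..n}. S i)" "e \<notin> E - (\<Union>i\<in>{1..Suc n}. S' i)"
      unfolding S'_def UN_fun_upd_Suc using e by blast+
    then have "E - (\<Union>i\<in>{1..Suc n}. S' i) \<subset> E - (\<Union>i\<in>{1..n}. S i)"
      by blast
    then have "card (E - (\<Union>i\<in>{1..Suc n}. S' i)) < card (E - (\<Union>i\<in>{1..n}. S i))"
      using finite_E by (intro psubset_card_mono) auto
    moreover have "3 * t - 2 \<le> Suc n"
      using less.prems(3) by simp
    ultimately obtain m S'' where S'': "Suc n \<le> m" "\<forall>i\<in>{1..Suc n}. S'' i = S' i"
      "(\<Union>i\<in>{1..m}. S'' i) = E" "echidna_wrt P t E S'' m" "echidna_wrt Q t E S'' m"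
      using less.hyps ech unfolding S'_def by blast
    have "S'' i = S i" if "i \<in> {1..n}" for i
      using S''(2) that by (force simp: S'_def)
    then show ?thesis
      using S'' by (intro exI[of _ m] exI[of _ S'']) auto
  qed
qed

end

theorem lemma4p5:
  fixes t n :: nat and E :: "'a set" and indep :: "'a set \<Rightarrow> bool" and S :: "nat \<Rightarrow> 'a set"
  assumes "t \<ge> 2"
    and "matroid E indep"
    and "t2t_property t E indep"
    and "echidna t E indep S n"
    and "n \<ge> 4 * t - 3"
  shows "\<exists>m S'. m \<ge> n \<and> (\<forall>i \<in> {1..n}. S' i = S i) \<and>
           (\<Union>i\<in>{1..m}. S' i) = E \<and>
           echidna t E indep S' m \<and> coechidna t E indep S' m"
proof -
  interpret orthogonal_t2t t E "circuit E indep" "cocircuit E indep"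
  proof
    show "card (C \<inter> D) \<noteq> 1" if "circuit E indep C" "cocircuit E indep D" for C D
      using circuit_cocircuit_inter_card_ne_1[OF assms(2) that] .
  qed (use assms(1-3) in \<open>auto simp: matroid_def t2t_property_def circuit_def cocircuit_def\<close>)
  have cocircuit_eq: "circuit E (dual_indep E indep) = cocircuit E indep"
    by (simp add: fun_eq_iff cocircuit_def)
  have circuits: "echidna_wrt (circuit E indep) t E S n"
    using assms(4) by (simp add: echidna_def)
  moreover have "echidna_wrt (cocircuit E indep) t E S n"
    using dual.echidna_wrt_transfer[OF circuits] assms(1,5) by simp
  ultimately show ?thesis
    using echidnas_extend_to_cover[of S n] assms(5)
    unfolding echidna_def coechidna_def cocircuit_eq by simp
qed

end
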